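(* Let $A_1,B_1,A_2,B_2\in\mathrm{SL}_2(\mathbb C)$ with $[A_1,B_1][A_2,B_2]=I$, where $[X,Y]=XYX^{-1}Y^{-1}$. Assume there exists $M\in\mathrm{SL}_2(\mathbb C)$ with $$MA_1M^{-1}=A_2,\qquad MB_1M^{-1}=B_2,\qquad M^2=-I.$$ Set $A=A_1$, $B=B_1$, $C_1=M$, $C_2=M^{-1}[A_1,B_1]$. Then $[A,B]=C_1C_2$, $\mathrm{trace}(C_1)=\mathrm{trace}(C_2)=0$, and $(A_1,B_1,A_2,B_2)=(A,\,B,\,C_1^{-1}AC_1,\,C_1^{-1}BC_1)$, i.e. $(A_1,B_1,A_2,B_2)=\pi^*(A,B,C_1,C_2)$. If moreover $\mathrm{trace}[A_1,B_1]\neq2$, then $(A_1,B_1,A_2,B_2)$ comes from a representation of the $5$-punctured sphere: up to simultaneous conjugation, there exist $M_0,M_1,M_t,M_\lambda,M_\infty\in\mathrm{SL}_2(\mathbb C)$ with $M_0M_1M_tM_\lambda M_\infty=I$ and all five of trace $0$, such that $A_1=M_1M_tM_\lambda$, $B_1=M_\lambda M_\infty$, $A_2=M_t^{-1}A_1M_t$, $B_2=M_t^{-1}B_1M_t$.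
   Context: Representation spaces: $\tilde{\mathcal R}_{1/2}$ is the set of $(A,B,C_1,C_2)\in\mathrm{SL}_2(\mathbb C)^4$ with $[A,B]=C_1C_2$ and $\mathrm{trace}(C_1)=\mathrm{trace}(C_2)=0$, modulo simultaneous conjugation (monodromy of connections on an elliptic curve with two poles of exponent $\frac12$); $\mathcal R'$ is the set of $(A_1,B_1,A_2,B_2)\in\mathrm{SL}_2(\mathbb C)^4$ with $[A_1,B_1][A_2,B_2]=I$ modulo simultaneous conjugation (monodromy of genus $2$ curves). The map $\pi^*:\tilde{\mathcal R}_{1/2}\to\mathcal R'$, induced by the double cover of the elliptic curve branched at the two poles, is $\pi^*(A,B,C_1,C_2)=(A,B,C_1^{-1}AC_1,C_1^{-1}BC_1)$. A representation of the $5$-punctured sphere with all exponents $\frac12$ is a quintuple $(M_0,M_1,M_t,M_\lambda,M_\infty)$ of traceless matrices in $\mathrm{SL}_2(\mathbb C)$ with product $I$; it is sent into $\tilde{\mathcal R}_{1/2}$ and then by $\pi^*$ into $\mathcal R'$ via the formulas in the claim. *)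

theory Defs
  imports "HOL-Analysis.Analysis"
begin

type_synonym mat2 = "complex^2^2"

definition SL2 :: "mat2 set" where
  "SL2 = {X. det X = 1}"

definition comm :: "mat2 \<Rightarrow> mat2 \<Rightarrow> mat2" where
  "comm X Y = X ** Y ** matrix_inv X ** matrix_inv Y"

text \<open>The map pi^* from the elliptic two-pole representation space to genus 2.\<close>
definition pi_star :: "mat2 \<Rightarrow> mat2 \<Rightarrow> mat2 \<Rightarrow> mat2 \<Rightarrow> mat2 \<times> mat2 \<times> mat2 \<times> mat2" where
  "pi_star A B C1 C2 = (A, B, matrix_inv C1 ** A ** C1, matrix_inv C1 ** B ** C1)"

end

theory Submission
  imports Defs
begin

text \<open>
  In \<open>SL\<^sub>2(\<complex>)\<close> the Cayley--Hamilton identity \<open>X\<^sup>2 = tr X \<cdot> X - I\<close> shows that \<open>X\<^sup>2 = -I\<close>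
  exactly when \<open>tr X = 0\<close>, and then \<open>X\<^sup>-\<^sup>1 = -X\<close>.
  If \<open>A\<^sub>2, B\<^sub>2\<close> are the conjugates of \<open>A\<^sub>1, B\<^sub>1\<close> by \<open>M\<close>, then \<open>[A\<^sub>2,B\<^sub>2] = MKM\<^sup>-\<^sup>1\<close> for \<open>K = [A\<^sub>1,B\<^sub>1]\<close>,
  so the relation \<open>K \<cdot> MKM\<^sup>-\<^sup>1 = I\<close> gives \<open>KMK = M\<close> and \<open>(MK)\<^sup>2 = M\<^sup>2 = -I\<close>; hence
  \<open>C\<^sub>2 = M\<^sup>-\<^sup>1K = -MK\<close> is traceless.

  For the five-punctured sphere, \<open>N = A\<^sub>1B\<^sub>1 - B\<^sub>1A\<^sub>1\<close> is traceless with \<open>det N = 2 - tr K\<close>, so for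
  \<open>tr K \<noteq> 2\<close> a scalar multiple \<open>M\<^sub>\<infinity>\<close> of \<open>N\<close> lies in \<open>SL\<^sub>2\<close>. The relations then force
  \<open>M\<^sub>t = M\<^sup>-\<^sup>1\<close>, \<open>M\<^sub>\<lambda> = B\<^sub>1M\<^sub>\<infinity>\<^sup>-\<^sup>1\<close>, \<open>M\<^sub>1 = A\<^sub>1M\<^sub>\<infinity>B\<^sub>1\<^sup>-\<^sup>1M\<close> and \<open>M\<^sub>0 = (A\<^sub>1M\<^sub>\<infinity>)\<^sup>-\<^sup>1\<close>, and their
  tracelessness comes down to trace identities for \<open>2\<times>2\<close> matrices; for \<open>M\<^sub>1\<close> it is
  \<open>tr(A\<^sub>1NB\<^sub>1\<^sup>-\<^sup>1M) = tr(MK) - tr M\<close>, where both terms vanish by the first part.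
\<close>

lemma matrix_inv_right [simp]:
  fixes X :: "'a::field^'n^'n"
  assumes "det X \<noteq> 0"
  shows "X ** matrix_inv X = mat 1"
proof -
  have "\<exists>Y. X ** Y = mat 1 \<and> Y ** X = mat 1"
    using assms by (simp add: invertible_det_nz[symmetric] invertible_def)
  from someI_ex[OF this] show ?thesis
    by (simp add: matrix_inv_def)
qed

lemma matrix_inv_left [simp]:
  fixes X :: "'a::field^'n^'n"
  assumes "det X \<noteq> 0"
  shows "matrix_inv X ** X = mat 1"
  using assms matrix_inv_right matrix_left_right_inverse by blast

lemma matrix_inv_mult_cancel_left [simp]:
  fixes X :: "'a::field^'n^'n"
  assumes "det X \<noteq> 0"
  shows "matrix_inv X ** (X ** Y) = Y"
  by (simp add: assms matrix_mul_assoc)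

lemma matrix_mult_inv_cancel_left [simp]:
  fixes X :: "'a::field^'n^'n"
  assumes "det X \<noteq> 0"
  shows "X ** (matrix_inv X ** Y) = Y"
  by (simp add: assms matrix_mul_assoc)

lemma matrix_inv_unique:
  fixes X Y :: "'a::field^'n^'n"
  assumes "X ** Y = mat 1"
  shows "matrix_inv X = Y"
proof -
  have "det X \<noteq> 0"
    using assms invertible_det_nz invertible_right_inverse by blast
  then have "matrix_inv X = matrix_inv X ** (X ** Y)"
    using assms by simp
  also have "\<dots> = Y"
    using \<open>det X \<noteq> 0\<close> by simp
  finally show ?thesis .
qed

lemma matrix_inv_mat_1 [simp]: "matrix_inv (mat 1 :: 'a::field^'n^'n) = mat 1"
  by (simp add: matrix_inv_unique)

lemma det_matrix_inv:
  fixes X :: "'a::field^'n^'n"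
  assumes "det X \<noteq> 0"
  shows "det (matrix_inv X) = inverse (det X)"
proof -
  have "det X * det (matrix_inv X) = 1"
    using assms by (metis det_I det_mul matrix_inv_right)
  then show ?thesis
    by (rule inverse_unique[symmetric])
qed

lemma matrix_inv_matrix_inv [simp]:
  fixes X :: "'a::field^'n^'n"
  assumes "det X \<noteq> 0"
  shows "matrix_inv (matrix_inv X) = X"
  using assms by (simp add: matrix_inv_unique)

lemma matrix_inv_mult:
  fixes X Y :: "'a::field^'n^'n"
  assumes "det X \<noteq> 0" "det Y \<noteq> 0"
  shows "matrix_inv (X ** Y) = matrix_inv Y ** matrix_inv X"
  using assms by (intro matrix_inv_unique) (simp add: matrix_mul_assoc[symmetric])

lemma mat2_eq_iff:
  "(X::mat2) = Y \<longleftrightarrow> X$1$1 = Y$1$1 \<and> X$1$2 = Y$1$2 \<and> X$2$1 = Y$2$1 \<and> X$2$2 = Y$2$2"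
  by (simp add: vec_eq_iff forall_2)

lemma mat2_mult_nth: "((X::mat2) ** Y)$i$j = X$i$1 * Y$1$j + X$i$2 * Y$2$j"
  by (simp add: matrix_matrix_mult_def sum_2)

lemma mat2_mat_nth [simp]:
  "(mat c :: mat2)$1$1 = c" "(mat c :: mat2)$1$2 = 0" "(mat c :: mat2)$2$1 = 0" "(mat c :: mat2)$2$2 = c"
  by (simp_all add: mat_def)

lemma trace_mat2: "trace (X::mat2) = X$1$1 + X$2$2"
  by (simp add: trace_def sum_2)

lemmas mat2_entry_simps = mat2_eq_iff mat2_mult_nth trace_mat2 det_2

definition adj2 :: "mat2 \<Rightarrow> mat2" where
  "adj2 X = (\<chi> i j. if i = 1 then (if j = 1 then X$2$2 else - X$1$2)
                             else (if j = 1 then - X$2$1 else X$1$1))"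

lemma adj2_nth [simp]:
  "adj2 X $1$1 = X$2$2" "adj2 X $1$2 = - X$1$2" "adj2 X $2$1 = - X$2$1" "adj2 X $2$2 = X$1$1"
  by (simp_all add: adj2_def)

lemma matrix_inv_mat2: "det (X::mat2) = 1 \<Longrightarrow> matrix_inv X = adj2 X"
  by (rule matrix_inv_unique) (simp add: mat2_entry_simps algebra_simps)

lemma mat2_cayley_hamilton: "(X::mat2) ** X = mat (trace X) ** X - mat (det X)"
  by (simp add: mat2_entry_simps algebra_simps)

lemma det_mat2_scalar_mult: "det (mat c ** (X::mat2)) = c\<^sup>2 * det X"
  by (simp add: mat2_entry_simps algebra_simps power2_eq_square)

lemma trace_mat2_scalar_mult: "trace (mat c ** (X::mat2)) = c * trace X"
  by (simp add: mat2_entry_simps algebra_simps)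

lemma mat2_mult_uminus_left [simp]: "(- X :: mat2) ** (Y::mat2) = - (X ** Y)"
  by (simp add: mat2_entry_simps)

lemma mat2_mult_uminus_right [simp]: "(X::mat2) ** (- Y :: mat2) = - (X ** Y)"
  by (simp add: mat2_entry_simps)

lemma trace_mat2_uminus [simp]: "trace (- (X::mat2)) = - trace X"
  by (simp add: trace_mat2)

lemma SL2_square_eq_neg_one_iff:
  fixes X :: mat2
  assumes "det X = 1"
  shows "X ** X = - mat 1 \<longleftrightarrow> trace X = 0"
proof
  assume "X ** X = - mat 1"
  then have "mat (trace X) ** X = 0"
    using assms mat2_cayley_hamilton[of X] by (simp add: mat2_eq_iff)
  then have "(trace X)\<^sup>2 = 0"
    using assms det_mat2_scalar_mult[of "trace X" X] by (simp add: det_2)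
  then show "trace X = 0"
    by simp
next
  assume "trace X = 0"
  then show "X ** X = - mat 1"
    using assms mat2_cayley_hamilton[of X] by (simp add: mat2_eq_iff)
qed

lemma matrix_inv_traceless_SL2:
  fixes X :: mat2
  assumes "det X = 1" "trace X = 0"
  shows "matrix_inv X = - X"
proof (rule matrix_inv_unique)
  have "X ** X = - mat 1"
    using assms by (simp add: SL2_square_eq_neg_one_iff)
  then show "X ** - X = mat 1"
    by simp
qed

lemma obtain_scalar_mult_det_eq_1:
  fixes N :: mat2
  assumes "det N \<noteq> 0"
  obtains c where "det (mat c ** N) = 1"
proof
  have "(csqrt (det N))\<^sup>2 = det N"
    by simp
  then show "det (mat (1 / csqrt (det N)) ** N) = 1"
    using assms by (simp add: det_mat2_scalar_mult power_divide)
qed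

lemma det_commutator_diff:
  fixes A B :: mat2
  assumes "det A = 1" "det B = 1"
  shows "det (A ** B - B ** A) = 2 - trace (comm A B)"
proof -
  have "det (A ** B - B ** A) = 2 * det A * det B - trace (A ** B ** adj2 A ** adj2 B)"
    by (simp add: mat2_entry_simps) algebra
  then show ?thesis
    using assms by (simp add: comm_def matrix_inv_mat2)
qed

lemma trace_commutator_diff_mult_inv:
  fixes A B :: mat2
  assumes "det A = 1"
  shows "trace ((A ** B - B ** A) ** matrix_inv A) = 0"
  using assms by (simp add: matrix_inv_mat2 mat2_entry_simps algebra_simps)

lemma trace_mult_commutator_diff:
  fixes A B :: mat2
  shows "trace (B ** (A ** B - B ** A)) = 0"
  by (simp add: mat2_entry_simps algebra_simps)

lemma trace_mult_commutator_diff_mult_inv: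
  fixes A B X :: mat2
  assumes "det A = 1" "det B = 1"
  shows "trace (A ** (A ** B - B ** A) ** matrix_inv B ** X) = trace (X ** comm A B) - trace X"
proof -
  have "trace (A ** (A ** B - B ** A) ** adj2 B ** X)
          = trace (X ** (A ** B ** adj2 A ** adj2 B)) - det A * det B * trace X"
    by (simp add: mat2_entry_simps) algebra
  then show ?thesis
    using assms by (simp add: comm_def matrix_inv_mat2)
qed

lemma comm_conj:
  fixes A B M :: mat2
  assumes "det A \<noteq> 0" "det B \<noteq> 0" "det M \<noteq> 0"
  shows "comm (M ** A ** matrix_inv M) (M ** B ** matrix_inv M) = M ** comm A B ** matrix_inv M"
  using assms
  by (simp add: comm_def matrix_inv_mult det_mul det_matrix_inv matrix_mul_assoc[symmetric])

lemma trace_mult_comm_eq_0_if_genus2_relation: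
  fixes A B M :: mat2
  assumes dA: "det A = 1" and dB: "det B = 1" and dM: "det M = 1"
    and M2: "M ** M = - mat 1"
    and rel: "comm A B ** comm (M ** A ** matrix_inv M) (M ** B ** matrix_inv M) = mat 1"
  shows "trace (M ** comm A B) = 0"
proof -
  define K where "K = comm A B"
  have "K ** (M ** K ** matrix_inv M) = mat 1"
    using rel comm_conj[of A B M] dA dB dM by (simp add: K_def)
  then have "K ** M ** K = M"
    using dM by (metis matrix_mul_assoc matrix_inv_left matrix_mul_lid matrix_mul_rid one_neq_zero)
  then have "(M ** K) ** (M ** K) = - mat 1"
    using M2 by (metis matrix_mul_assoc)
  moreover have "det (M ** K) = 1"
    using dA dB dM by (simp add: K_def comm_def det_mul det_matrix_inv)
  ultimately show ?thesis
    using SL2_square_eq_neg_one_iff K_def by blast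
qed

lemma five_punctured_sphere_decomposition:
  fixes A B M :: mat2
  assumes dA: "det A = 1" and dB: "det B = 1" and dM: "det M = 1"
    and trM: "trace M = 0" and trMK: "trace (M ** comm A B) = 0"
    and trK: "trace (comm A B) \<noteq> 2"
  obtains M0 M1 Ml Minf where
    "det M0 = 1" "det M1 = 1" "det Ml = 1" "det Minf = 1"
    "trace M0 = 0" "trace M1 = 0" "trace Ml = 0" "trace Minf = 0"
    "M0 ** M1 ** matrix_inv M ** Ml ** Minf = mat 1"
    "A = M1 ** matrix_inv M ** Ml" "B = Ml ** Minf"
proof -
  define N where "N = A ** B - B ** A"
  have "det N \<noteq> 0"
    using det_commutator_diff[OF dA dB] trK by (simp add: N_def)
  then obtain c where "det (mat c ** N) = 1"
    by (rule obtain_scalar_mult_det_eq_1)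
  define Minf where "Minf = mat c ** N"
  have dMinf: "det Minf = 1"
    using \<open>det (mat c ** N) = 1\<close> by (simp add: Minf_def)
  have trMinf: "trace Minf = 0"
    using trace_mul_sym[of A B] by (simp add: Minf_def N_def trace_mat2_scalar_mult trace_sub)
  have invMinf: "matrix_inv Minf = - Minf"
    using dMinf trMinf by (rule matrix_inv_traceless_SL2)
  define M0 where "M0 = matrix_inv Minf ** matrix_inv A"
  define M1 where "M1 = A ** Minf ** matrix_inv B ** M"
  define Ml where "Ml = B ** matrix_inv Minf"
  have "M0 = - (mat c ** ((A ** B - B ** A) ** matrix_inv A))"
    unfolding M0_def invMinf by (simp add: Minf_def N_def mat2_entry_simps algebra_simps)
  then have "trace M0 = 0"
    using trace_commutator_diff_mult_inv[OF dA] by (simp add: trace_mat2_scalar_mult)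
  moreover have "M1 = mat c ** (A ** (A ** B - B ** A) ** matrix_inv B ** M)"
    by (simp add: M1_def Minf_def N_def mat2_entry_simps algebra_simps)
  then have "trace M1 = 0"
    using trace_mult_commutator_diff_mult_inv[OF dA dB] trM trMK
    by (simp add: trace_mat2_scalar_mult)
  moreover have "Ml = - (mat c ** (B ** (A ** B - B ** A)))"
    unfolding Ml_def invMinf by (simp add: Minf_def N_def mat2_entry_simps algebra_simps)
  then have "trace Ml = 0"
    by (simp add: trace_mat2_scalar_mult trace_mult_commutator_diff)
  moreover have "det M0 = 1" "det M1 = 1" "det Ml = 1" "det Minf = 1"
    using dA dB dM dMinf by (simp_all add: M0_def M1_def Ml_def det_mul det_matrix_inv)
  moreover have "M0 ** M1 ** matrix_inv M ** Ml ** Minf = mat 1"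
    using dA dB dM dMinf
    by (simp add: M0_def M1_def Ml_def matrix_mul_assoc[symmetric])
  moreover have "A = M1 ** matrix_inv M ** Ml" "B = Ml ** Minf"
    using dA dB dM dMinf
    by (simp_all add: M1_def Ml_def matrix_mul_assoc[symmetric])
  ultimately show ?thesis
    using that trMinf by blast
qed

theorem mainTheorem4:
  fixes A1 B1 A2 B2 M :: mat2
  assumes "A1 \<in> SL2" "B1 \<in> SL2" "A2 \<in> SL2" "B2 \<in> SL2"
    and "comm A1 B1 ** comm A2 B2 = mat 1"
    and "M \<in> SL2"
    and "M ** A1 ** matrix_inv M = A2"
    and "M ** B1 ** matrix_inv M = B2"
    and "M ** M = - mat 1"
  shows "(let A = A1; B = B1; C1 = M; C2 = matrix_inv M ** comm A1 B1 in
            C2 \<in> SL2 \<and> comm A B = C1 ** C2 \<and> trace C1 = 0 \<and> trace C2 = 0 \<and>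
            (A1, B1, A2, B2) = (A, B, matrix_inv C1 ** A ** C1, matrix_inv C1 ** B ** C1) \<and>
            (A1, B1, A2, B2) = pi_star A B C1 C2)
       \<and> (trace (comm A1 B1) \<noteq> 2 \<longrightarrow>
           (\<exists>P M0 M1 Mt Ml Minf.
              P \<in> SL2 \<and> M0 \<in> SL2 \<and> M1 \<in> SL2 \<and> Mt \<in> SL2 \<and> Ml \<in> SL2 \<and> Minf \<in> SL2 \<and>
              M0 ** M1 ** Mt ** Ml ** Minf = mat 1 \<and>
              trace M0 = 0 \<and> trace M1 = 0 \<and> trace Mt = 0 \<and> trace Ml = 0 \<and> trace Minf = 0 \<and>
              P ** A1 ** matrix_inv P = M1 ** Mt ** Ml \<and>
              P ** B1 ** matrix_inv P = Ml ** Minf \<and>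
              P ** A2 ** matrix_inv P = matrix_inv Mt ** (P ** A1 ** matrix_inv P) ** Mt \<and>
              P ** B2 ** matrix_inv P = matrix_inv Mt ** (P ** B1 ** matrix_inv P) ** Mt))"
proof -
  have dA: "det A1 = 1" and dB: "det B1 = 1" and dM: "det M = 1"
    using assms(1,2,6) by (simp_all add: SL2_def)
  have trM: "trace M = 0"
    using dM assms(9) SL2_square_eq_neg_one_iff by blast
  have invM: "matrix_inv M = - M"
    using dM trM by (rule matrix_inv_traceless_SL2)
  have trMK: "trace (M ** comm A1 B1) = 0"
    using trace_mult_comm_eq_0_if_genus2_relation[OF dA dB dM assms(9)] assms(5,7,8) by simp
  have C2: "det (matrix_inv M ** comm A1 B1) = 1" "trace (matrix_inv M ** comm A1 B1) = 0"
    using dA dB dM by (simp add: comm_def det_mul det_matrix_inv) (simp add: invM trMK)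
  have A2: "A2 = matrix_inv M ** A1 ** M" and B2: "B2 = matrix_inv M ** B1 ** M"
    using assms(7,8) invM by (simp_all add: matrix_mul_assoc[symmetric])
  have sphere: "\<exists>M0 M1 Mt Ml Minf. M0 \<in> SL2 \<and> M1 \<in> SL2 \<and> Mt \<in> SL2 \<and> Ml \<in> SL2 \<and> Minf \<in> SL2 \<and>
      M0 ** M1 ** Mt ** Ml ** Minf = mat 1 \<and>
      trace M0 = 0 \<and> trace M1 = 0 \<and> trace Mt = 0 \<and> trace Ml = 0 \<and> trace Minf = 0 \<and>
      A1 = M1 ** Mt ** Ml \<and> B1 = Ml ** Minf \<and>
      A2 = matrix_inv Mt ** A1 ** Mt \<and> B2 = matrix_inv Mt ** B1 ** Mt"
    if trK: "trace (comm A1 B1) \<noteq> 2"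
  proof -
    obtain M0 M1 Ml Minf where "det M0 = 1" "det M1 = 1" "det Ml = 1" "det Minf = 1"
      "trace M0 = 0" "trace M1 = 0" "trace Ml = 0" "trace Minf = 0"
      "M0 ** M1 ** matrix_inv M ** Ml ** Minf = mat 1"
      "A1 = M1 ** matrix_inv M ** Ml" "B1 = Ml ** Minf"
      using five_punctured_sphere_decomposition[OF dA dB dM trM trMK trK] by blast
    moreover have "trace (matrix_inv M) = 0"
      using trM invM by simp
    ultimately show ?thesis
      using assms(7,8) dM
      by (intro exI[of _ M0] exI[of _ M1] exI[of _ "matrix_inv M"] exI[of _ Ml] exI[of _ Minf])
        (simp add: SL2_def det_matrix_inv)
  qed
  show ?thesis
    using C2 A2 B2 trM dM
    unfolding Let_def SL2_def pi_star_def
    by simp (intro impI exI[of _ "mat 1"]; insert sphere; simp add: SL2_def)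
qed

end
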